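(* Let $p,q,e$ be positive integers and $n>1$ an integer. If $(x,y)\in\mathbb{Z}_{2^e}^2$ lies on a cycle of length $n$ of the Cat map over $\mathbb{Z}_{2^e}$, then $$(G_n-2)\,x\equiv 0\pmod{2^e}\quad\text{and}\quad (G_n-2)\,y\equiv 0\pmod{2^e}.$$
   Context: $\mathbf{C}=\begin{bmatrix}1 & p\\ q & 1+pq\end{bmatrix}$; the Cat map over $\mathbb{Z}_{2^e}$ is the bijection $v\mapsto\mathbf{C}v\bmod 2^e$ of $\mathbb{Z}_{2^e}^2$; a point lies on a cycle of length $n$ if $n$ is the least positive integer with $\mathbf{C}^nv\equiv v\pmod{2^e}$. $A=pq+2$, $B=\sqrt{A^2-4}$, $G_n=\left(\frac{A+B}{2}\right)^n+\left(\frac{A-B}{2}\right)^n$ (an integer). *)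

theory Defs
  imports Complex_Main
begin

definition cat_step :: "int \<Rightarrow> int \<Rightarrow> nat \<Rightarrow> int \<times> int \<Rightarrow> int \<times> int" where
  "cat_step p q e v = (case v of (x, y) \<Rightarrow>
     ((x + p * y) mod 2 ^ e, (q * x + (1 + p * q) * y) mod 2 ^ e))"

definition on_cycle :: "int \<Rightarrow> int \<Rightarrow> nat \<Rightarrow> nat \<Rightarrow> int \<times> int \<Rightarrow> bool" where
  "on_cycle p q e n v \<longleftrightarrow> 0 < n \<and> (cat_step p q e ^^ n) v = v \<and>
     (\<forall>m. 0 < m \<and> m < n \<longrightarrow> (cat_step p q e ^^ m) v \<noteq> v)"

definition catA :: "int \<Rightarrow> int \<Rightarrow> real" where
  "catA p q = real_of_int (p * q + 2)"

definition catB :: "int \<Rightarrow> int \<Rightarrow> real" where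
  "catB p q = sqrt (catA p q ^ 2 - 4)"

definition catG :: "int \<Rightarrow> int \<Rightarrow> nat \<Rightarrow> real" where
  "catG p q n = ((catA p q + catB p q) / 2) ^ n + ((catA p q - catB p q) / 2) ^ n"

end

theory Submission
  imports Defs "HOL-Number_Theory.Cong"
begin

text \<open>
  The Cat matrix \<open>C\<close> has trace \<open>A = pq + 2\<close> and determinant 1, so by Cayley--Hamilton
  every coordinate sequence of an orbit \<open>C\<^sup>k v\<close> satisfies \<open>s\<^sub>k\<^sub>+\<^sub>2 = A s\<^sub>k\<^sub>+\<^sub>1 - s\<^sub>k\<close>.
  For any such sequence \<open>s\<^sub>k\<^sub>+\<^sub>2\<^sub>n + s\<^sub>k = G\<^sub>n s\<^sub>k\<^sub>+\<^sub>n\<close>, where \<open>G\<^sub>n\<close> is the Lucas sequence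
  with the same recurrence and \<open>G\<^sub>0 = 2, G\<^sub>1 = A\<close>. On a cycle of length \<open>n\<close> the orbit
  returns to \<open>v\<close> at times \<open>n\<close> and \<open>2n\<close>, so taking \<open>k = 0\<close> gives \<open>2v \<equiv> G\<^sub>n v\<close>.
\<close>

fun lucas_v :: "'a::comm_ring_1 \<Rightarrow> nat \<Rightarrow> 'a" where
  "lucas_v a 0 = 2"
| "lucas_v a (Suc 0) = a"
| "lucas_v a (Suc (Suc n)) = a * lucas_v a (Suc n) - lucas_v a n"

lemma of_int_lucas_v: "of_int (lucas_v a n) = lucas_v (of_int a) n"
  by (induction a n rule: lucas_v.induct) simp_all

lemma power_sum_eq_lucas_v:
  fixes r s :: "'a::comm_ring_1"
  assumes "r * s = 1"
  shows "r ^ n + s ^ n = lucas_v (r + s) n"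
proof (induction "r + s" n rule: lucas_v.induct)
  case (3 n)
  have "r ^ Suc (Suc n) + s ^ Suc (Suc n)
      = (r + s) * (r ^ Suc n + s ^ Suc n) - r * s * (r ^ n + s ^ n)"
    by (simp add: algebra_simps)
  then show ?case using 3 assms by simp
qed simp_all

lemma catG_eq_lucas_v:
  assumes "0 \<le> p * q"
  shows "catG p q n = of_int (lucas_v (p * q + 2) n)"
proof -
  let ?a = "catA p q" and ?b = "catB p q"
  have "0 \<le> real_of_int (p * q)"
    using assms by (simp only: of_int_0_le_iff)
  then have "0 \<le> of_int (p * q) * (of_int (p * q) + (4::real))"
    by (intro mult_nonneg_nonneg) linarith+
  also have "\<dots> = ?a\<^sup>2 - 4"
    by (simp add: catA_def power2_eq_square algebra_simps)
  finally have "?a\<^sup>2 - 4 \<ge> 0" .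
  then have "?b\<^sup>2 = ?a\<^sup>2 - 4"
    by (simp add: catB_def)
  then have "(?a + ?b) / 2 * ((?a - ?b) / 2) = 1"
    by (simp add: field_simps power2_eq_square)
  then have "catG p q n = lucas_v ((?a + ?b) / 2 + (?a - ?b) / 2) n"
    unfolding catG_def by (rule power_sum_eq_lucas_v)
  also have "(?a + ?b) / 2 + (?a - ?b) / 2 = of_int (p * q + 2)"
    by (simp add: catA_def field_simps)
  finally show ?thesis by (simp add: of_int_lucas_v)
qed

lemma lucas_v_shift_dvd:
  fixes s :: "nat \<Rightarrow> 'a::comm_ring_1"
  assumes rec: "\<And>k. m dvd s (Suc (Suc k)) - (a * s (Suc k) - s k)"
  shows "m dvd s (k + 2 * n) + s k - lucas_v a n * s (k + n)"
  using rec
proof (induction a n arbitrary: k rule: lucas_v.induct)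
  case (1 a)
  then show ?case by simp
next
  case (2 a)
  then show ?case by (simp add: algebra_simps)
next
  case (3 a n)
  let ?E = "\<lambda>n k. s (k + 2 * n) + s k - lucas_v a n * s (k + n)"
  let ?R = "\<lambda>k. s (Suc (Suc k)) - (a * s (Suc k) - s k)"
  have split: "?E (Suc (Suc n)) k
      = a * ?E (Suc n) (Suc k) - ?E n (Suc (Suc k)) + ?R (k + 2 * n + 2) + ?R k"
    by (simp add: algebra_simps)
  show ?case
    unfolding split
    by (intro dvd_add dvd_diff dvd_mult "3.IH"(1) "3.IH"(2) "3.prems")
qed

lemma cat_step_cong:
  "[fst (cat_step p q e u) = fst u + p * snd u] (mod 2 ^ e)"
  "[snd (cat_step p q e u) = q * fst u + (1 + p * q) * snd u] (mod 2 ^ e)"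
  by (simp_all add: cat_step_def case_prod_beta)

lemma cat_step_twice_cong:
  fixes p q :: int and e :: nat
  defines "f \<equiv> cat_step p q e"
  shows "[fst (f (f u)) = (p * q + 2) * fst (f u) - fst u] (mod 2 ^ e)"
    and "[snd (f (f u)) = (p * q + 2) * snd (f u) - snd u] (mod 2 ^ e)"
proof -
  obtain x y where u: "u = (x, y)" by (cases u)
  have fx: "[fst (f u) = x + p * y] (mod 2 ^ e)"
    and fy: "[snd (f u) = q * x + (1 + p * q) * y] (mod 2 ^ e)"
    using cat_step_cong[of p q e u] by (simp_all add: f_def u)
  have "[fst (f (f u)) = fst (f u) + p * snd (f u)] (mod 2 ^ e)"
    unfolding f_def by (rule cat_step_cong)
  also have "[fst (f u) + p * snd (f u) = (x + p * y) + p * (q * x + (1 + p * q) * y)] (mod 2 ^ e)"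
    by (intro cong_add cong_mult cong_refl fx fy)
  also have "(x + p * y) + p * (q * x + (1 + p * q) * y) = (p * q + 2) * (x + p * y) - x"
    by (simp add: algebra_simps)
  also have "[(p * q + 2) * (x + p * y) - x = (p * q + 2) * fst (f u) - fst u] (mod 2 ^ e)"
    by (intro cong_diff cong_mult cong_refl cong_sym[OF fx]) (simp add: u)
  finally show "[fst (f (f u)) = (p * q + 2) * fst (f u) - fst u] (mod 2 ^ e)" .
  have "[snd (f (f u)) = q * fst (f u) + (1 + p * q) * snd (f u)] (mod 2 ^ e)"
    unfolding f_def by (rule cat_step_cong)
  also have "[q * fst (f u) + (1 + p * q) * snd (f u)
      = q * (x + p * y) + (1 + p * q) * (q * x + (1 + p * q) * y)] (mod 2 ^ e)"
    by (intro cong_add cong_mult cong_refl fx fy)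
  also have "q * (x + p * y) + (1 + p * q) * (q * x + (1 + p * q) * y)
      = (p * q + 2) * (q * x + (1 + p * q) * y) - y"
    by (simp add: algebra_simps)
  also have "[(p * q + 2) * (q * x + (1 + p * q) * y) - y
      = (p * q + 2) * snd (f u) - snd u] (mod 2 ^ e)"
    by (intro cong_diff cong_mult cong_refl cong_sym[OF fy]) (simp add: u)
  finally show "[snd (f (f u)) = (p * q + 2) * snd (f u) - snd u] (mod 2 ^ e)" .
qed

lemma cat_step_period_dvd:
  fixes p q :: int and e n :: nat
  assumes period: "(cat_step p q e ^^ n) u = u"
  shows "2 ^ e dvd (lucas_v (p * q + 2) n - 2) * fst u"
    and "2 ^ e dvd (lucas_v (p * q + 2) n - 2) * snd u"
proof -
  let ?t = "\<lambda>k. (cat_step p q e ^^ k) u" and ?g = "lucas_v (p * q + 2) n"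
  have t_n: "?t (0 + n) = u" and t_2n: "?t (0 + 2 * n) = u"
    using period by (simp_all add: mult_2 funpow_add)
  have "2 ^ e dvd fst (?t (0 + 2 * n)) + fst (?t 0) - ?g * fst (?t (0 + n))"
    using cat_step_twice_cong(1) by (intro lucas_v_shift_dvd) (simp add: cong_iff_dvd_diff)
  moreover have "2 ^ e dvd snd (?t (0 + 2 * n)) + snd (?t 0) - ?g * snd (?t (0 + n))"
    using cat_step_twice_cong(2) by (intro lucas_v_shift_dvd) (simp add: cong_iff_dvd_diff)
  ultimately show "2 ^ e dvd (?g - 2) * fst u" and "2 ^ e dvd (?g - 2) * snd u"
    unfolding t_n t_2n by (simp_all add: left_diff_distrib dvd_diff_commute)
qed

theorem lemma7:
  fixes p q :: int and e n :: nat and x y :: int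
  assumes "p > 0" and "q > 0" and "e > 0" and "n > 1"
    and "0 \<le> x" and "x < 2 ^ e" and "0 \<le> y" and "y < 2 ^ e"
    and "on_cycle p q e n (x, y)"
  shows "\<exists>g::int. real_of_int g = catG p q n \<and>
           (g - 2) * x mod 2 ^ e = 0 \<and> (g - 2) * y mod 2 ^ e = 0"
proof (intro exI conjI)
  show "real_of_int (lucas_v (p * q + 2) n) = catG p q n"
    using assms(1,2) by (simp add: catG_eq_lucas_v)
  have "(cat_step p q e ^^ n) (x, y) = (x, y)"
    using assms(9) by (simp add: on_cycle_def)
  from cat_step_period_dvd[OF this]
  show "(lucas_v (p * q + 2) n - 2) * x mod 2 ^ e = 0"
    and "(lucas_v (p * q + 2) n - 2) * y mod 2 ^ e = 0"
    by simp_all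
qed

end
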